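(* Let $H:\mathbb{R}^d\to\mathbb{R}$ be continuously differentiable and strongly convex with parameter $C>0$ (i.e. $H(y)\ge H(x)+\nabla H(x)^T(y-x)+\frac C2\|y-x\|_2^2$ for all $x,y$), with $L$-Lipschitz gradient, and with unique minimizer $x^*$ at which the Hessian $A:=\nabla^2H(x^* )$ exists. Let $\gamma_t=at^{-r}$ with $a>0$ and $1/2<r<1$. For integers $1\le s\le t$ define $$\bar\beta^t_s=\gamma_s\sum_{i=s}^{t-1}\prod_{k=s+1}^{i}(I-\gamma_kA),\qquad \phi^t_s=\bar\beta^t_s-A^{-1},$$ where the empty product $\prod_{k=s+1}^{s}(I-\gamma_kA)$ is the identity $I$. Then $$\sum_{s=1}^{t-1}\|\phi^t_s\|=O(t^r)\quad\text{as }t\to\infty.$$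
   Context: $\|\cdot\|$ is the operator norm induced by the Euclidean norm. *)

theory Defs
  imports "HOL-Analysis.Analysis" "HOL-Library.Landau_Symbols"
begin

text \<open>Ordered matrix product  prod_{k=s+1}^{i} (I - g k A) ; empty product is the identity.\<close>
definition step_prod :: "(nat \<Rightarrow> real) \<Rightarrow> real^'n^'n \<Rightarrow> nat \<Rightarrow> nat \<Rightarrow> real^'n^'n" where
  "step_prod g A s i = foldr (\<lambda>k M. M ** (mat 1 - g k *\<^sub>R A)) (rev [Suc s..<Suc i]) (mat 1)"

definition beta_bar :: "(nat \<Rightarrow> real) \<Rightarrow> real^'n^'n \<Rightarrow> nat \<Rightarrow> nat \<Rightarrow> real^'n^'n" where
  "beta_bar g A t s = g s *\<^sub>R (\<Sum>i\<in>{s..<t}. step_prod g A s i)"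

definition phi :: "(nat \<Rightarrow> real) \<Rightarrow> real^'n^'n \<Rightarrow> nat \<Rightarrow> nat \<Rightarrow> real^'n^'n" where
  "phi g A t s = beta_bar g A t s - matrix_inv A"

end

theory Submission
  imports Defs
begin

(* Write P s i for step_prod, the ordered product of the factors I - gamma_k A over s < k <= i.
   Since P s (i+1) A^-1 = P s i A^-1 - gamma_(i+1) P s i, the inverse telescopes and
   phi^t_s = sum_(i=s..t-1) (gamma_s - gamma_(i+1)) P s i - P s t A^-1.
   Strong convexity and the Lipschitz bound pass to the derivative A, giving v . A v >= C |v|^2 and
   |A v| <= L |v|, hence |I - gamma A| <= exp (- C gamma + L^2 gamma^2 / 2) for every gamma >= 0.
   As r > 1/2 the squares gamma_k^2 are summable, so |P s i| <= K exp (- C (i - s) gamma_i).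
   What remains is a scalar double sum, in which the row of each s contributes O(s^(r-1));
   summing over s < t gives O(t^r). *)

lemma strongly_convex_imp_strongly_monotone:
  fixes H :: "'a::real_inner \<Rightarrow> real"
  assumes "\<And>x y. H y \<ge> H x + G x \<bullet> (y - x) + C / 2 * (norm (y - x))\<^sup>2"
  shows "C * (norm (y - x))\<^sup>2 \<le> (G y - G x) \<bullet> (y - x)"
proof -
  have "H y \<ge> H x + G x \<bullet> (y - x) + C / 2 * (norm (y - x))\<^sup>2"
    and "H x \<ge> H y + G y \<bullet> (x - y) + C / 2 * (norm (x - y))\<^sup>2"
    by (rule assms)+
  then show ?thesis
    by (simp add: norm_minus_commute inner_diff_left inner_diff_right)
qed

lemma has_real_derivative_le_of_increments_le:
  assumes "(\<phi> has_real_derivative D) (at 0)" and "\<And>h. h > 0 \<Longrightarrow> \<phi> h - \<phi> 0 \<le> h * c"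
  shows "D \<le> c"
proof (rule tendsto_upperbound)
  show "((\<lambda>h. (\<phi> (0 + h) - \<phi> 0) / h) \<longlongrightarrow> D) (at_right 0)"
    using assms(1) unfolding DERIV_def filterlim_at_split by blast
  show "\<forall>\<^sub>F h in at_right 0. (\<phi> (0 + h) - \<phi> 0) / h \<le> c"
    using assms(2) by (auto simp: eventually_at_right_field divide_le_eq mult.commute intro: exI[of _ 1])
qed simp

lemma has_vector_derivative_along_line:
  fixes G :: "'a::real_normed_vector \<Rightarrow> 'b::real_normed_vector"
  assumes "(G has_derivative G') (at x)"
  shows "((\<lambda>h. G (x + h *\<^sub>R v)) has_vector_derivative G' v) (at 0)"
proof -
  have "((\<lambda>h. x + h *\<^sub>R v) has_derivative (\<lambda>h. h *\<^sub>R v)) (at 0)"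
    by (auto intro!: derivative_eq_intros)
  moreover have "(G has_derivative G') (at ((\<lambda>h. x + h *\<^sub>R v) 0))"
    using assms by simp
  ultimately show ?thesis
    unfolding has_vector_derivative_def
    using has_derivative_compose linear.scaleR[OF has_derivative_linear[OF assms]] by fastforce
qed

lemma derivative_coercive_of_strongly_monotone:
  fixes G :: "'a::real_inner \<Rightarrow> 'a"
  assumes mono: "\<And>x y. C * (norm (y - x))\<^sup>2 \<le> (G y - G x) \<bullet> (y - x)"
    and deriv: "(G has_derivative G') (at x)"
  shows "C * (norm v)\<^sup>2 \<le> v \<bullet> G' v"
proof -
  have "((\<lambda>h. - (G (x + h *\<^sub>R v) \<bullet> v)) has_real_derivative - (G' v \<bullet> v)) (at 0)"
    using bounded_linear.has_vector_derivative[OF bounded_linear_inner_left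
        has_vector_derivative_along_line[OF deriv], THEN has_vector_derivative_minus]
    by (simp add: has_real_derivative_iff_has_vector_derivative)
  moreover have "- (G (x + h *\<^sub>R v) \<bullet> v) - - (G (x + 0 *\<^sub>R v) \<bullet> v) \<le> h * - (C * (norm v)\<^sup>2)"
    if h: "h > 0" for h
  proof -
    have "C * (norm (h *\<^sub>R v))\<^sup>2 \<le> (G (x + h *\<^sub>R v) - G x) \<bullet> (h *\<^sub>R v)"
      using mono[where x = x and y = "x + h *\<^sub>R v"] by (simp only: add_diff_cancel_left')
    moreover have "(norm (h *\<^sub>R v))\<^sup>2 = h * (h * (norm v)\<^sup>2)"
      using h by (simp add: power2_eq_square)
    ultimately have "h * (h * (C * (norm v)\<^sup>2)) \<le> h * ((G (x + h *\<^sub>R v) - G x) \<bullet> v)"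
      by (simp add: mult_ac)
    then have "h * (C * (norm v)\<^sup>2) \<le> (G (x + h *\<^sub>R v) - G x) \<bullet> v"
      using h by simp
    then show ?thesis
      by (simp add: inner_diff_left)
  qed
  ultimately have "- (G' v \<bullet> v) \<le> - (C * (norm v)\<^sup>2)"
    by (rule has_real_derivative_le_of_increments_le)
  then show ?thesis
    by (simp add: inner_commute)
qed

lemma derivative_bounded_of_lipschitz:
  fixes G :: "'a::real_inner \<Rightarrow> 'a"
  assumes lipschitz: "\<And>x y. norm (G x - G y) \<le> L * norm (x - y)"
    and deriv: "(G has_derivative G') (at x)"
  shows "norm (G' v) \<le> L * norm v"
proof -
  have "((\<lambda>h. G (x + h *\<^sub>R v) \<bullet> G' v) has_real_derivative G' v \<bullet> G' v) (at 0)"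
    using bounded_linear.has_vector_derivative[OF bounded_linear_inner_left
        has_vector_derivative_along_line[OF deriv]]
    by (simp add: has_real_derivative_iff_has_vector_derivative)
  moreover have "G (x + h *\<^sub>R v) \<bullet> G' v - G (x + 0 *\<^sub>R v) \<bullet> G' v \<le> h * (L * norm v * norm (G' v))"
    if h: "h > 0" for h
  proof -
    have "(G (x + h *\<^sub>R v) - G x) \<bullet> G' v \<le> norm (G (x + h *\<^sub>R v) - G x) * norm (G' v)"
      by (rule norm_cauchy_schwarz)
    also have "\<dots> \<le> L * (h * norm v) * norm (G' v)"
      using lipschitz[of "x + h *\<^sub>R v" x] h by (simp add: mult_right_mono)
    finally show ?thesis
      by (simp add: inner_diff_left algebra_simps)
  qed
  ultimately have "(norm (G' v))\<^sup>2 \<le> L * norm v * norm (G' v)"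
    using has_real_derivative_le_of_increments_le by (simp add: power2_norm_eq_inner)
  then have square: "norm (G' v) * norm (G' v) \<le> (L * norm v) * norm (G' v)"
    by (simp add: power2_eq_square)
  show ?thesis
  proof (cases "G' v = 0")
    case True
    then show ?thesis
      using order_trans[OF norm_ge_zero lipschitz[of "x + v" x]] by simp
  next
    case False
    then show ?thesis
      using mult_right_le_imp_le[OF square] by simp
  qed
qed

lemma norm_diff_scaleR_le_exp:
  fixes f :: "'a::real_inner \<Rightarrow> 'a"
  assumes coercive: "C * (norm w)\<^sup>2 \<le> w \<bullet> f w" and bounded: "norm (f w) \<le> L * norm w"
    and "0 \<le> \<gamma>"
  shows "norm (w - \<gamma> *\<^sub>R f w) \<le> exp (- C * \<gamma> + L\<^sup>2 * \<gamma>\<^sup>2 / 2) * norm w"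
proof (rule power2_le_imp_le)
  have "(norm (f w))\<^sup>2 \<le> (L * norm w)\<^sup>2"
    using bounded by (simp add: power_mono)
  then have "\<gamma>\<^sup>2 * (norm (f w))\<^sup>2 \<le> \<gamma>\<^sup>2 * (L * norm w)\<^sup>2"
    by (simp add: mult_left_mono)
  moreover have "2 * \<gamma> * (C * (norm w)\<^sup>2) \<le> 2 * \<gamma> * (w \<bullet> f w)"
    using coercive \<open>0 \<le> \<gamma>\<close> by (simp add: mult_left_mono)
  moreover have "(norm (w - \<gamma> *\<^sub>R f w))\<^sup>2 = (norm w)\<^sup>2 - 2 * \<gamma> * (w \<bullet> f w) + \<gamma>\<^sup>2 * (norm (f w))\<^sup>2"
    unfolding power2_norm_eq_inner
    by (simp add: inner_diff_left inner_diff_right inner_commute algebra_simps power2_eq_square)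
  ultimately have "(norm (w - \<gamma> *\<^sub>R f w))\<^sup>2 \<le> (1 + (- 2 * C * \<gamma> + L\<^sup>2 * \<gamma>\<^sup>2)) * (norm w)\<^sup>2"
    by (simp add: algebra_simps power_mult_distrib)
  also have "\<dots> \<le> exp (- 2 * C * \<gamma> + L\<^sup>2 * \<gamma>\<^sup>2) * (norm w)\<^sup>2"
    by (intro mult_right_mono exp_ge_add_one_self) simp
  also have "\<dots> = (exp (- C * \<gamma> + L\<^sup>2 * \<gamma>\<^sup>2 / 2) * norm w)\<^sup>2"
    by (simp add: power_mult_distrib flip: exp_double)
  finally show "(norm (w - \<gamma> *\<^sub>R f w))\<^sup>2 \<le> (exp (- C * \<gamma> + L\<^sup>2 * \<gamma>\<^sup>2 / 2) * norm w)\<^sup>2" .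
qed simp

lemma coercive_norm_ge:
  fixes f :: "'a::real_inner \<Rightarrow> 'a"
  assumes coercive: "C * (norm w)\<^sup>2 \<le> w \<bullet> f w"
  shows "C * norm w \<le> norm (f w)"
proof (cases "w = 0")
  case False
  have "norm w * (C * norm w) \<le> norm w * norm (f w)"
    using order_trans[OF coercive norm_cauchy_schwarz] by (simp add: power2_eq_square mult_ac)
  then show ?thesis
    using False by simp
qed simp

lemma matrix_inv_right:
  fixes A :: "'a::semiring_1^'n^'n"
  assumes "invertible A"
  shows "A ** matrix_inv A = mat 1"
  using someI_ex[OF assms[unfolded invertible_def]] unfolding matrix_inv_def by blast

lemma coercive_matrix_invertible:
  fixes A :: "real^'n^'n"
  assumes "C > 0" and coercive: "\<And>v. C * (norm v)\<^sup>2 \<le> v \<bullet> (A *v v)"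
  shows "invertible A"
  unfolding invertible_left_inverse matrix_left_invertible_ker
proof (intro allI impI)
  fix x :: "real^'n"
  assume "A *v x = 0"
  then have "C * norm x \<le> 0"
    using coercive_norm_ge[where f = "(*v) A", OF coercive[of x]] by simp
  then show "x = 0"
    using \<open>C > 0\<close> by (simp add: mult_le_0_iff)
qed

lemma norm_matrix_inv_le:
  fixes A :: "real^'n^'n"
  assumes "C > 0" and coercive: "\<And>v. C * (norm v)\<^sup>2 \<le> v \<bullet> (A *v v)"
  shows "norm (matrix_inv A *v v) \<le> norm v / C"
  using coercive_norm_ge[where f = "(*v) A", OF coercive, of "matrix_inv A *v v"] \<open>C > 0\<close>
  by (simp add: matrix_vector_mul_assoc matrix_inv_right[OF coercive_matrix_invertible[OF assms]]
      field_simps)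

lemma step_prod_self [simp]: "step_prod g A s s = mat 1"
  by (simp add: step_prod_def)

lemma step_prod_Suc:
  "s \<le> i \<Longrightarrow> step_prod g A s (Suc i) = step_prod g A s i ** (mat 1 - g (Suc i) *\<^sub>R A)"
  by (simp add: step_prod_def)

lemma step_prod_Suc_mult_vector:
  fixes A :: "real^'n^'n"
  assumes "s \<le> i"
  shows "step_prod g A s (Suc i) *v v = step_prod g A s i *v (v - g (Suc i) *\<^sub>R (A *v v))"
  using assms by (simp add: step_prod_Suc matrix_vector_mult_diff_rdistrib
      flip: matrix_vector_mul_assoc scaleR_matrix_vector_assoc)

lemma norm_step_prod_le:
  fixes A :: "real^'n^'n"
  assumes contraction: "\<And>k w. norm (w - g k *\<^sub>R (A *v w)) \<le> n k * norm w"
    and n_nonneg: "\<And>k. 0 \<le> n k"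
    and "s \<le> i"
  shows "norm (step_prod g A s i *v w) \<le> (\<Prod>k\<in>{s<..i}. n k) * norm w"
  using \<open>s \<le> i\<close>
proof (induction i arbitrary: w rule: dec_induct)
  case (step i)
  have "norm (step_prod g A s (Suc i) *v w) \<le> (\<Prod>k\<in>{s<..i}. n k) * norm (w - g (Suc i) *\<^sub>R (A *v w))"
    using step.IH step.hyps by (simp add: step_prod_Suc_mult_vector)
  also have "\<dots> \<le> (\<Prod>k\<in>{s<..i}. n k) * (n (Suc i) * norm w)"
    by (intro mult_left_mono contraction prod_nonneg n_nonneg)
  also have "\<dots> = (\<Prod>k\<in>{s<..Suc i}. n k) * norm w"
  proof -
    have "{s<..Suc i} = insert (Suc i) {s<..i}"
      using step.hyps by auto
    then show ?thesis
      by (simp add: mult_ac)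
  qed
  finally show ?case .
qed simp

lemma sum_step_prod_telescope:
  fixes A B :: "real^'n^'n"
  assumes "A ** B = mat 1" and "s \<le> t"
  shows "B *v v = (\<Sum>i\<in>{s..<t}. g (Suc i) *\<^sub>R (step_prod g A s i *v v)) + step_prod g A s t *v (B *v v)"
  using \<open>s \<le> t\<close>
proof (induction t rule: dec_induct)
  case (step t)
  have "A *v (B *v v) = v"
    using assms(1) by (simp add: matrix_vector_mul_assoc)
  then show ?case
    using step by (simp add: step_prod_Suc_mult_vector matrix_vector_mult_diff_distrib
        matrix_vector_mult_scaleR)
qed simp

lemma sum_matrix_vector_mult: "(\<Sum>i\<in>I. M i) *v v = (\<Sum>i\<in>I. M i *v (v::real^'n))"
  by (induction I rule: infinite_finite_induct) (simp_all add: matrix_vector_mult_add_rdistrib)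

lemma phi_mult_vector:
  fixes A :: "real^'n^'n"
  assumes "invertible A" and "s \<le> t"
  shows "phi g A t s *v v = (\<Sum>i\<in>{s..<t}. (g s - g (Suc i)) *\<^sub>R (step_prod g A s i *v v))
           - step_prod g A s t *v (matrix_inv A *v v)"
proof -
  have "phi g A t s *v v = g s *\<^sub>R (\<Sum>i\<in>{s..<t}. step_prod g A s i *v v) - matrix_inv A *v v"
    by (simp add: phi_def beta_bar_def matrix_vector_mult_diff_rdistrib sum_matrix_vector_mult
        flip: scaleR_matrix_vector_assoc)
  then show ?thesis
    using sum_step_prod_telescope[OF matrix_inv_right[OF assms(1)] assms(2), of v g]
    by (simp add: scaleR_sum_right scaleR_diff_left sum_subtractf algebra_simps)
qed

lemma norm_step_prod_exp_le:
  fixes A :: "real^'n^'n"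
  assumes coercive: "\<And>v. C * (norm v)\<^sup>2 \<le> v \<bullet> (A *v v)"
    and bounded: "\<And>v. norm (A *v v) \<le> L * norm v"
    and "\<And>k. 0 \<le> g k" and "s \<le> i"
  shows "norm (step_prod g A s i *v w)
    \<le> exp (- C * (\<Sum>k\<in>{s<..i}. g k) + L\<^sup>2 / 2 * (\<Sum>k\<in>{s<..i}. (g k)\<^sup>2)) * norm w"
proof -
  have "norm (step_prod g A s i *v w) \<le> (\<Prod>k\<in>{s<..i}. exp (- C * g k + L\<^sup>2 * (g k)\<^sup>2 / 2)) * norm w"
    using norm_diff_scaleR_le_exp[where f = "(*v) A", OF coercive bounded] assms
    by (intro norm_step_prod_le) auto
  also have "(\<Prod>k\<in>{s<..i}. exp (- C * g k + L\<^sup>2 * (g k)\<^sup>2 / 2))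
      = exp (- C * (\<Sum>k\<in>{s<..i}. g k) + L\<^sup>2 / 2 * (\<Sum>k\<in>{s<..i}. (g k)\<^sup>2))"
    by (simp add: sum.distrib sum_subtractf sum_negf sum_distrib_left sum_divide_distrib flip: exp_sum)
  finally show ?thesis .
qed

lemma onorm_phi_le:
  fixes A :: "real^'n^'n"
  assumes "invertible A"
    and inverse_bound: "\<And>v. norm (matrix_inv A *v v) \<le> norm v / C"
    and prod_bound: "\<And>i v. s \<le> i \<Longrightarrow> norm (step_prod g A s i *v v) \<le> \<beta> i * norm v"
    and "\<And>i. 0 \<le> \<beta> i" and gap: "\<And>i. s \<le> i \<Longrightarrow> g (Suc i) \<le> g s" and "s \<le> t"
  shows "onorm (\<lambda>v. phi g A t s *v v) \<le> (\<Sum>i=s..<t. (g s - g (Suc i)) * \<beta> i) + \<beta> t / C"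
proof (rule onorm_le)
  fix v
  have "norm (phi g A t s *v v) \<le> (\<Sum>i=s..<t. norm ((g s - g (Suc i)) *\<^sub>R (step_prod g A s i *v v)))
      + norm (step_prod g A s t *v (matrix_inv A *v v))"
    unfolding phi_mult_vector[OF assms(1) \<open>s \<le> t\<close>]
    by (intro order_trans[OF norm_triangle_ineq4] add_right_mono norm_sum)
  also have "\<dots> \<le> (\<Sum>i=s..<t. (g s - g (Suc i)) * (\<beta> i * norm v)) + \<beta> t * (norm v / C)"
  proof (intro add_mono sum_mono)
    fix i assume "i \<in> {s..<t}"
    then show "norm ((g s - g (Suc i)) *\<^sub>R (step_prod g A s i *v v)) \<le> (g s - g (Suc i)) * (\<beta> i * norm v)"
      using gap[of i] prod_bound[of i v] by (auto intro: mult_left_mono)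
  next
    show "norm (step_prod g A s t *v (matrix_inv A *v v)) \<le> \<beta> t * (norm v / C)"
      using prod_bound[OF \<open>s \<le> t\<close>, of "matrix_inv A *v v"] inverse_bound[of v] \<open>0 \<le> \<beta> t\<close>
      by (meson mult_left_mono order_trans)
  qed
  also have "\<dots> = ((\<Sum>i=s..<t. (g s - g (Suc i)) * \<beta> i) + \<beta> t / C) * norm v"
    by (simp add: sum_distrib_left sum_distrib_right algebra_simps)
  finally show "norm (phi g A t s *v v) \<le> ((\<Sum>i=s..<t. (g s - g (Suc i)) * \<beta> i) + \<beta> t / C) * norm v" .
qed

lemma powr_neg_diff_le:
  fixes x y r :: real
  assumes "0 < x" "x \<le> y" "0 \<le> r" "r \<le> 1"
  shows "x powr - r - y powr - r \<le> x powr - r * (1 - x / y)"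
proof -
  have "x / y \<le> (x / y) powr r"
    using powr_mono'[of r 1 "x / y"] assms by simp
  then have "x powr - r * (x / y) \<le> x powr - r * (x / y) powr r"
    by (rule mult_left_mono) simp
  also have "\<dots> = y powr - r"
    using assms by (simp add: powr_divide powr_minus field_simps)
  finally show ?thesis
    by (simp add: algebra_simps)
qed

lemma exp_neg_powr_le_inverse_square:
  fixes b p :: real
  assumes "0 < b" "0 < p"
  obtains M where "\<And>x. 1 \<le> x \<Longrightarrow> exp (- b * x powr p) \<le> M / x\<^sup>2"
proof -
  define m :: nat where "m = nat \<lceil>2 / p\<rceil>"
  have "2 / p \<le> real m"
    using assms le_of_int_ceiling[of "2 / p"] by (simp add: m_def)
  then have m: "2 \<le> p * m" "0 < m"
    using assms by (auto simp: field_simps intro!: gr0I)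
  have "exp (- b * x powr p) \<le> (m / b) ^ m / x\<^sup>2" if "1 \<le> x" for x
  proof -
    define y where "y = b * x powr p"
    have "0 \<le> y"
      using assms by (simp add: y_def)
    then have "(y / m) ^ m \<le> (1 + y / m) ^ m"
      by (intro power_mono) simp_all
    also have "\<dots> \<le> exp y"
      using \<open>0 \<le> y\<close> m by (intro exp_ge_one_plus_x_over_n_power_n) simp_all
    finally have y_le: "(y / m) ^ m \<le> exp y" .
    have "x\<^sup>2 \<le> x powr (p * m)"
      using that m powr_mono[of 2 "p * m" x] by simp
    also have "\<dots> = (x powr p) ^ m"
      using that by (simp add: powr_realpow flip: powr_powr)
    also have "\<dots> = (m / b * (y / m)) ^ m"
      using assms m by (simp add: y_def)
    also have "\<dots> = (m / b) ^ m * (y / m) ^ m"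
      by (rule power_mult_distrib)
    also have "\<dots> \<le> (m / b) ^ m * exp y"
      using assms y_le by (intro mult_left_mono) simp_all
    finally show ?thesis
      using that assms by (simp add: y_def exp_minus field_simps)
  qed
  then show ?thesis
    by (rule that)
qed

lemma sum_Suc_mult_power_le:
  fixes \<sigma> :: real
  assumes "0 \<le> \<sigma>" "\<sigma> < 1"
  shows "(\<Sum>j<N. (real j + 1) * \<sigma> ^ j) \<le> 1 / (1 - \<sigma>)\<^sup>2"
proof -
  have closed_form: "(\<Sum>j<N. (real j + 1) * \<sigma> ^ j) * (1 - \<sigma>)\<^sup>2
      = 1 - (real N + 1) * \<sigma> ^ N + real N * \<sigma> ^ (N + 1)"
    by (induction N) (simp_all add: algebra_simps power2_eq_square)
  have "\<sigma> ^ N * (real N * \<sigma> - real N - 1) \<le> 0"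
    using assms mult_left_le[of \<sigma> "real N"] by (intro mult_nonneg_nonpos) auto
  then have "(\<Sum>j<N. (real j + 1) * \<sigma> ^ j) * (1 - \<sigma>)\<^sup>2 \<le> 1"
    unfolding closed_form by (simp add: algebra_simps)
  then show ?thesis
    using assms by (simp add: field_simps)
qed

lemma inverse_one_minus_exp_le:
  fixes x :: real
  assumes "0 < x"
  shows "1 / (1 - exp (- x)) \<le> 1 + 1 / x"
proof -
  have x_le: "x \<le> exp x - 1"
    using exp_ge_add_one_self[of x] by linarith
  have "1 / (1 - exp (- x)) = 1 + 1 / (exp x - 1)"
    using assms x_le by (simp add: exp_minus field_simps)
  also have "\<dots> \<le> 1 + 1 / x"
    using assms x_le by (simp add: frac_le)
  finally show ?thesis .
qed

lemma sum_inverse_square_tail_le: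
  assumes "1 \<le> s"
  shows "(\<Sum>j<N. if s < j then 1 / (real j)\<^sup>2 else 0) \<le> 1 / real s"
proof -
  have "(\<Sum>j<N. if s < j then 1 / (real j)\<^sup>2 else 0) \<le> 1 / real s - 1 / real (max s (N - 1))"
  proof (induction N)
    case (Suc N)
    show ?case
    proof (cases "s < N")
      case True
      then have "max s (N - 1) = N - 1" and "max s (Suc N - 1) = N"
        by auto
      moreover have "1 / (real N)\<^sup>2 \<le> 1 / real (N - 1) - 1 / real N"
        using True assms by (simp add: of_nat_diff field_simps power2_eq_square)
      ultimately show ?thesis
        using Suc.IH True by simp
    qed (use Suc.IH in \<open>simp add: max_def\<close>)
  qed simp
  then show ?thesis
    by (rule order_trans) simp
qed

lemma sum_powr_le:
  fixes r :: real
  assumes "0 < r" "r < 1"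
  shows "(\<Sum>s=1..N. real s powr (r - 1)) \<le> real N powr r / r"
proof (induction N)
  case (Suc N)
  have "real (Suc N) powr (r - 1) \<le> (real (Suc N) powr r - real N powr r) / r"
  proof (cases "N = 0")
    case False
    have "\<exists>z>real N. z < real N + 1 \<and>
        (real N + 1) powr r - real N powr r = (real N + 1 - real N) * (r * z powr (r - 1))"
      by (rule MVT2) (use False in \<open>auto intro!: has_real_derivative_powr\<close>)
    then obtain z where z: "real N < z" "z < real N + 1"
      and mvt: "(real N + 1) powr r - real N powr r = r * z powr (r - 1)"
      by auto
    have "real (Suc N) powr (r - 1) \<le> z powr (r - 1)"
      using z assms False by (intro powr_mono2') auto
    then show ?thesis
      using mvt assms by (simp add: field_simps)
  qed (use assms in simp)
  then show ?case
    using Suc.IH assms by (simp add: field_simps)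
qed simp

definition step_size :: "real \<Rightarrow> real \<Rightarrow> nat \<Rightarrow> real" where
  "step_size a r k = a * real k powr - r"

lemma step_size_nonneg: "0 \<le> a \<Longrightarrow> 0 \<le> step_size a r k"
  by (simp add: step_size_def)

lemma step_size_antimono:
  "0 \<le> a \<Longrightarrow> 0 \<le> r \<Longrightarrow> 1 \<le> k \<Longrightarrow> k \<le> i \<Longrightarrow> step_size a r i \<le> step_size a r k"
  by (auto simp: step_size_def intro!: mult_left_mono powr_mono2')

lemma step_size_half_le:
  assumes "0 \<le> a" "0 \<le> r" "r \<le> 1" "1 \<le> m" "m \<le> i" "i \<le> 2 * m"
  shows "step_size a r m / 2 \<le> step_size a r i"
proof -
  have "1 / 2 \<le> (2::real) powr - r"
    using powr_mono[of "-1" "-r" 2] assms by (simp add: powr_minus)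
  then have "real m powr - r / 2 \<le> real (2 * m) powr - r"
    using mult_right_mono[of "1 / 2" "2 powr - r" "real m powr - r"] by (simp add: powr_mult)
  also have "\<dots> \<le> real i powr - r"
    using assms by (intro powr_mono2') auto
  finally show ?thesis
    using assms by (simp add: step_size_def mult_left_mono flip: times_divide_eq_right)
qed

lemma step_size_gap_exp_le:
  assumes "0 < a" "0 < r" "r < 1" "0 < c" "1 \<le> s"
    and M: "\<And>x. 1 \<le> x \<Longrightarrow> exp (- (c * a / 2) * x powr (1 - r)) \<le> M / x\<^sup>2"
  shows "(step_size a r s - step_size a r (Suc (s + j))) * exp (- c * j * step_size a r (s + j))
      \<le> step_size a r s / s * ((j + 1) * exp (- c * step_size a r s / 2) ^ j)
        + step_size a r s * (if s < j then M / (real j)\<^sup>2 else 0)"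
proof -
  let ?\<gamma> = "step_size a r"
  have "a * (real s powr - r - real (s + j + 1) powr - r) \<le> a * (real s powr - r * (1 - s / (s + j + 1)))"
    using powr_neg_diff_le[of s "s + j + 1" r] assms by (intro mult_left_mono) auto
  then have gap: "?\<gamma> s - ?\<gamma> (Suc (s + j)) \<le> ?\<gamma> s * ((j + 1) / (s + j + 1))"
    using assms by (simp add: step_size_def field_simps)
  have gap_nonneg: "0 \<le> ?\<gamma> s - ?\<gamma> (Suc (s + j))"
    using step_size_antimono[of a r s "Suc (s + j)"] assms by simp
  have \<gamma>_nonneg: "0 \<le> ?\<gamma> s"
    using assms by (simp add: step_size_nonneg)
  have "0 < M"
    using order.strict_trans2[OF exp_gt_zero M[of 1]] by simp
  (* For j <= s the rate gamma (s + j) is comparable to gamma s and the decay in j is geometric;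
     beyond that it is comparable to gamma j, and exp (- c a j^(1-r) / 2) beats j^-2. *)
  show ?thesis
  proof (cases "j \<le> s")
    case True
    have "?\<gamma> s / 2 \<le> ?\<gamma> (s + j)"
      using step_size_half_le[of a r s "s + j"] assms True by simp
    then have "c * j * (?\<gamma> s / 2) \<le> c * j * ?\<gamma> (s + j)"
      using assms by (intro mult_left_mono) auto
    then have "exp (- c * j * ?\<gamma> (s + j)) \<le> exp (j * (- c * ?\<gamma> s / 2))"
      by (simp add: mult_ac)
    then have decay: "exp (- c * j * ?\<gamma> (s + j)) \<le> exp (- c * ?\<gamma> s / 2) ^ j"
      by (simp only: exp_of_nat_mult)
    have "?\<gamma> s * ((j + 1) / (s + j + 1)) \<le> ?\<gamma> s / s * (j + 1)"
      using assms \<gamma>_nonneg by (simp add: field_simps mult_left_mono)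
    then have "(?\<gamma> s - ?\<gamma> (Suc (s + j))) * exp (- c * j * ?\<gamma> (s + j))
        \<le> (?\<gamma> s / s * (j + 1)) * exp (- c * ?\<gamma> s / 2) ^ j"
      using gap gap_nonneg decay by (intro mult_mono) auto
    then show ?thesis
      using True by (simp add: ac_simps)
  next
    case False
    have "?\<gamma> j / 2 \<le> ?\<gamma> (s + j)"
      using step_size_half_le[of a r j "s + j"] assms False by simp
    then have "c * a / 2 * j powr (1 - r) \<le> c * j * ?\<gamma> (s + j)"
      using assms False mult_left_mono[of "?\<gamma> j / 2" "?\<gamma> (s + j)" "c * j"]
      by (simp add: step_size_def powr_diff powr_minus field_simps)
    then have "exp (- c * j * ?\<gamma> (s + j)) \<le> exp (- (c * a / 2) * j powr (1 - r))"
      by simp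
    also have "\<dots> \<le> M / (real j)\<^sup>2"
      using M[of j] False by simp
    finally have decay: "exp (- c * j * ?\<gamma> (s + j)) \<le> M / (real j)\<^sup>2" .
    moreover have "?\<gamma> s * ((j + 1) / (s + j + 1)) \<le> ?\<gamma> s"
      using \<gamma>_nonneg by (intro mult_left_le) simp_all
    ultimately have "(?\<gamma> s - ?\<gamma> (Suc (s + j))) * exp (- c * j * ?\<gamma> (s + j)) \<le> ?\<gamma> s * (M / (real j)\<^sup>2)"
      using gap gap_nonneg by (intro mult_mono) auto
    moreover have "0 \<le> ?\<gamma> s / s * ((real j + 1) * exp (- c * ?\<gamma> s / 2) ^ j)"
      using \<gamma>_nonneg by simp
    ultimately show ?thesis
      using False by simp
  qed
qed

lemma inverse_one_minus_exp_step_size_le: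
  assumes "0 < a" "0 \<le> r" "0 < c" "1 \<le> s"
  shows "1 / (1 - exp (- c * step_size a r s / 2)) \<le> (1 + 2 / (c * a)) * real s powr r"
proof -
  have "1 / (1 - exp (- (c * step_size a r s / 2))) \<le> 1 + 1 / (c * step_size a r s / 2)"
    using assms by (intro inverse_one_minus_exp_le) (simp add: step_size_def)
  also have "\<dots> = 1 + 2 / (c * a) * real s powr r"
    using assms by (simp add: step_size_def powr_minus field_simps)
  also have "\<dots> \<le> (1 + 2 / (c * a)) * real s powr r"
    using assms ge_one_powr_ge_zero[of "real s" r] by (simp add: algebra_simps)
  finally show ?thesis
    by simp
qed

lemma sum_step_size_gap_exp_le:
  assumes "0 < a" "0 < r" "r < 1" "0 < c"
  obtains M where "\<And>s t. 1 \<le> s \<Longrightarrow>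
    (\<Sum>i=s..<t. (step_size a r s - step_size a r (Suc i)) * exp (- c * real (i - s) * step_size a r i))
      \<le> M * real s powr (r - 1)"
proof -
  obtain M where M: "\<And>x. 1 \<le> x \<Longrightarrow> exp (- (c * a / 2) * x powr (1 - r)) \<le> M / x\<^sup>2"
    using exp_neg_powr_le_inverse_square[of "c * a / 2" "1 - r"] assms by auto
  have "0 \<le> M"
    using order.trans[OF exp_ge_zero M[of 1]] by simp
  define K where "K = 1 + 2 / (c * a)"
  have "(\<Sum>i=s..<t. (step_size a r s - step_size a r (Suc i)) * exp (- c * real (i - s) * step_size a r i))
      \<le> a * (K\<^sup>2 + M) * real s powr (r - 1)" if "1 \<le> s" for s t
  proof -
    define \<gamma> where "\<gamma> = step_size a r s"
    define \<sigma> where "\<sigma> = exp (- c * \<gamma> / 2)"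
    have \<gamma>: "\<gamma> = a * real s powr - r" "0 < \<gamma>"
      using that assms by (simp_all add: \<gamma>_def step_size_def)
    have "(\<Sum>i=s..<t. (\<gamma> - step_size a r (Suc i)) * exp (- c * real (i - s) * step_size a r i))
        = (\<Sum>j<t - s. (\<gamma> - step_size a r (Suc (s + j))) * exp (- c * j * step_size a r (s + j)))"
      by (subst sum.atLeastLessThan_shift_0) (simp add: lessThan_atLeast0)
    also have "\<dots> \<le> (\<Sum>j<t - s. \<gamma> / s * ((real j + 1) * \<sigma> ^ j) + \<gamma> * (if s < j then M / (real j)\<^sup>2 else 0))"
      unfolding \<gamma>_def \<sigma>_def by (intro sum_mono step_size_gap_exp_le[OF assms that M])
    also have "\<dots> = \<gamma> / s * (\<Sum>j<t - s. (real j + 1) * \<sigma> ^ j)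
        + \<gamma> * M * (\<Sum>j<t - s. if s < j then 1 / (real j)\<^sup>2 else 0)"
      unfolding sum.distrib sum_distrib_left by (intro arg_cong2[where f = "(+)"] sum.cong) auto
    also have "\<dots> \<le> \<gamma> / s * (1 / (1 - \<sigma>))\<^sup>2 + \<gamma> * M * (1 / s)"
      using sum_Suc_mult_power_le[of \<sigma> "t - s"] sum_inverse_square_tail_le[OF that, of "t - s"]
        \<gamma> \<open>0 \<le> M\<close> assms
      by (intro add_mono mult_left_mono) (auto simp: \<sigma>_def power_divide)
    also have "\<dots> \<le> \<gamma> / s * (K * real s powr r)\<^sup>2 + \<gamma> * M * (1 / s)"
      using inverse_one_minus_exp_step_size_le[of a r c s] assms that K_def \<gamma> \<open>0 \<le> M\<close>
      by (intro add_mono mult_left_mono power_mono) (simp_all add: \<sigma>_def \<gamma>_def)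
    also have "\<dots> = a * K\<^sup>2 * (real s powr - r / s * (real s powr r)\<^sup>2)
        + a * M * (real s powr - r / s)"
      using assms by (simp add: \<gamma> power_mult_distrib field_simps)
    also have "\<dots> = a * K\<^sup>2 * real s powr (r - 1) + a * M * real s powr (- r - 1)"
      using that by (simp add: powr_diff powr_minus power2_eq_square field_simps)
    also have "\<dots> \<le> a * K\<^sup>2 * real s powr (r - 1) + a * M * real s powr (r - 1)"
      using that assms \<open>0 \<le> M\<close> by (intro add_left_mono mult_left_mono powr_mono) auto
    finally show ?thesis
      by (simp add: \<gamma>_def algebra_simps)
  qed
  then show ?thesis
    by (rule that)
qed

lemma double_sum_step_size_gap_exp_le:
  assumes "0 < a" "0 < r" "r < 1" "0 < c"
  obtains M where "\<And>t. (\<Sum>s=1..t-1. \<Sum>i=s..<t.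
      (step_size a r s - step_size a r (Suc i)) * exp (- c * real (i - s) * step_size a r i))
    \<le> M * real t powr r"
proof -
  obtain M where M: "\<And>s t. 1 \<le> s \<Longrightarrow>
    (\<Sum>i=s..<t. (step_size a r s - step_size a r (Suc i)) * exp (- c * real (i - s) * step_size a r i))
      \<le> M * real s powr (r - 1)"
    using sum_step_size_gap_exp_le[OF assms] by blast
  have "0 \<le> M"
    using M[of 1 1] by simp
  have "(\<Sum>s=1..t-1. \<Sum>i=s..<t.
      (step_size a r s - step_size a r (Suc i)) * exp (- c * real (i - s) * step_size a r i))
    \<le> M / r * real t powr r" for t
  proof -
    have "(\<Sum>s=1..t-1. \<Sum>i=s..<t.
        (step_size a r s - step_size a r (Suc i)) * exp (- c * real (i - s) * step_size a r i))
      \<le> (\<Sum>s=1..t-1. M * real s powr (r - 1))"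
      by (intro sum_mono M) simp
    also have "\<dots> \<le> (\<Sum>s=1..t. M * real s powr (r - 1))"
      using \<open>0 \<le> M\<close> by (intro sum_mono2) auto
    also have "\<dots> = M * (\<Sum>s=1..t. real s powr (r - 1))"
      by (simp add: sum_distrib_left)
    also have "\<dots> \<le> M * (real t powr r / r)"
      using \<open>0 \<le> M\<close> assms by (intro mult_left_mono sum_powr_le) auto
    finally show ?thesis
      by simp
  qed
  then show ?thesis
    by (rule that)
qed

lemma sum_exp_step_size_le:
  assumes "0 < a" "0 \<le> r" "0 < c" "1 \<le> t"
  shows "(\<Sum>s=1..t-1. exp (- c * real (t - s) * step_size a r t)) \<le> (1 + 1 / (c * a)) * real t powr r"
proof -
  define \<rho> where "\<rho> = exp (- c * step_size a r t)"
  have \<rho>: "0 \<le> \<rho>" "\<rho> < 1"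
    using assms by (auto simp: \<rho>_def step_size_def)
  have "(\<Sum>s=1..t-1. exp (- c * real (t - s) * step_size a r t)) = (\<Sum>s=1..t-1. \<rho> ^ (t - s))"
    by (simp add: \<rho>_def mult_ac flip: exp_of_nat_mult)
  also have "\<dots> = (\<Sum>m\<in>(\<lambda>s. t - s) ` {1..t-1}. \<rho> ^ m)"
    by (subst sum.reindex) (auto simp: inj_on_def)
  also have "\<dots> \<le> (\<Sum>m<t. \<rho> ^ m)"
    using \<rho> by (intro sum_mono2) auto
  also have "\<dots> \<le> 1 / (1 - \<rho>)"
    using \<rho> by (simp add: sum_gp_strict divide_right_mono)
  also have "\<dots> \<le> 1 + 1 / (c * step_size a r t)"
    using inverse_one_minus_exp_le[of "c * step_size a r t"] assms by (simp add: \<rho>_def step_size_def)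
  also have "\<dots> = 1 + 1 / (c * a) * real t powr r"
    using assms by (simp add: step_size_def powr_minus field_simps)
  also have "\<dots> \<le> (1 + 1 / (c * a)) * real t powr r"
    using assms ge_one_powr_ge_zero[of "real t" r] by (simp add: algebra_simps)
  finally show ?thesis .
qed

lemma norm_step_prod_step_size_le:
  fixes A :: "real^'n^'n"
  assumes coercive: "\<And>v. C * (norm v)\<^sup>2 \<le> v \<bullet> (A *v v)"
    and bounded: "\<And>v. norm (A *v v) \<le> L * norm v"
    and "0 \<le> C" "0 < a" "1 / 2 < r"
  obtains K where "0 < K"
    and "\<And>s i w. s \<le> i \<Longrightarrow>
      norm (step_prod (step_size a r) A s i *v w) \<le> K * exp (- C * real (i - s) * step_size a r i) * norm w"
proof -
  define S where "S = (\<Sum>k. real k powr (- 2 * r))"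
  have summable: "summable (\<lambda>k. real k powr (- 2 * r))"
    using summable_real_powr_iff assms by simp
  have "norm (step_prod (step_size a r) A s i *v w)
      \<le> exp (L\<^sup>2 / 2 * (a\<^sup>2 * S)) * exp (- C * real (i - s) * step_size a r i) * norm w"
    if "s \<le> i" for s i w
  proof -
    have "(step_size a r k)\<^sup>2 = a\<^sup>2 * real k powr (- 2 * r)" for k
      by (cases "k = 0") (simp_all add: step_size_def power_mult_distrib powr_power)
    then have "(\<Sum>k\<in>{s<..i}. (step_size a r k)\<^sup>2) = a\<^sup>2 * (\<Sum>k\<in>{s<..i}. real k powr (- 2 * r))"
      by (simp add: sum_distrib_left)
    also have "\<dots> \<le> a\<^sup>2 * S"
      unfolding S_def by (intro mult_left_mono sum_le_suminf summable) auto
    finally have squares: "(\<Sum>k\<in>{s<..i}. (step_size a r k)\<^sup>2) \<le> a\<^sup>2 * S" .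
    have "real (card {s<..i}) * step_size a r i \<le> (\<Sum>k\<in>{s<..i}. step_size a r k)"
      using assms by (intro sum_bounded_below step_size_antimono) auto
    then have linear: "real (i - s) * step_size a r i \<le> (\<Sum>k\<in>{s<..i}. step_size a r k)"
      by simp
    have "norm (step_prod (step_size a r) A s i *v w) \<le> exp (- C * (\<Sum>k\<in>{s<..i}. step_size a r k)
        + L\<^sup>2 / 2 * (\<Sum>k\<in>{s<..i}. (step_size a r k)\<^sup>2)) * norm w"
      using assms that by (intro norm_step_prod_exp_le[OF coercive bounded] step_size_nonneg) auto
    also have "\<dots> \<le> exp (- C * real (i - s) * step_size a r i + L\<^sup>2 / 2 * (a\<^sup>2 * S)) * norm w"
    proof -
      have "C * (real (i - s) * step_size a r i) \<le> C * (\<Sum>k\<in>{s<..i}. step_size a r k)"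
        using linear \<open>0 \<le> C\<close> by (rule mult_left_mono)
      moreover have "L\<^sup>2 / 2 * (\<Sum>k\<in>{s<..i}. (step_size a r k)\<^sup>2) \<le> L\<^sup>2 / 2 * (a\<^sup>2 * S)"
        using squares by (rule mult_left_mono) simp
      ultimately show ?thesis
        by (intro mult_right_mono) auto
    qed
    also have "\<dots> = exp (L\<^sup>2 / 2 * (a\<^sup>2 * S)) * exp (- C * real (i - s) * step_size a r i) * norm w"
      by (simp only: exp_add[symmetric] add.commute)
    finally show ?thesis .
  qed
  then show ?thesis
    by (rule that[OF exp_gt_zero])
qed

lemma sum_onorm_phi_bigo:
  fixes A :: "real^'n^'n"
  assumes coercive: "\<And>v. C * (norm v)\<^sup>2 \<le> v \<bullet> (A *v v)"
    and bounded: "\<And>v. norm (A *v v) \<le> L * norm v"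
    and "0 < C" "0 < a" "1 / 2 < r" "r < 1"
  shows "(\<lambda>t::nat. \<Sum>s=1..t-1. onorm (\<lambda>v. phi (step_size a r) A t s *v v)) \<in> O(\<lambda>t. real t powr r)"
proof -
  let ?\<gamma> = "step_size a r"
  have "invertible A"
    using coercive_matrix_invertible[OF \<open>0 < C\<close> coercive] .
  obtain K where "0 < K" and K: "\<And>s i w. s \<le> i \<Longrightarrow>
      norm (step_prod ?\<gamma> A s i *v w) \<le> K * exp (- C * real (i - s) * ?\<gamma> i) * norm w"
    using norm_step_prod_step_size_le[OF coercive bounded less_imp_le[OF \<open>0 < C\<close>]] assms(4,5)
    by blast
  obtain M where M: "\<And>t. (\<Sum>s=1..t-1. \<Sum>i=s..<t.
      (?\<gamma> s - ?\<gamma> (Suc i)) * exp (- C * real (i - s) * ?\<gamma> i)) \<le> M * real t powr r"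
    using double_sum_step_size_gap_exp_le[of a r C] assms by auto
  have bound: "(\<Sum>s=1..t-1. onorm (\<lambda>v. phi ?\<gamma> A t s *v v))
      \<le> (K * M + K / C * (1 + 1 / (C * a))) * real t powr r" if "1 \<le> t" for t
  proof -
    have "(\<Sum>s=1..t-1. onorm (\<lambda>v. phi ?\<gamma> A t s *v v))
        \<le> (\<Sum>s=1..t-1. (\<Sum>i=s..<t. (?\<gamma> s - ?\<gamma> (Suc i)) * (K * exp (- C * real (i - s) * ?\<gamma> i)))
          + K * exp (- C * real (t - s) * ?\<gamma> t) / C)"
      using assms \<open>0 < K\<close>
      by (intro sum_mono onorm_phi_le[OF \<open>invertible A\<close> norm_matrix_inv_le[OF \<open>0 < C\<close> coercive]] K step_size_antimono) auto
    also have "\<dots> = K * (\<Sum>s=1..t-1. \<Sum>i=s..<t. (?\<gamma> s - ?\<gamma> (Suc i)) * exp (- C * real (i - s) * ?\<gamma> i))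
        + K / C * (\<Sum>s=1..t-1. exp (- C * real (t - s) * ?\<gamma> t))"
      by (simp add: sum.distrib sum_distrib_left sum_divide_distrib algebra_simps)
    also have "\<dots> \<le> K * (M * real t powr r) + K / C * ((1 + 1 / (C * a)) * real t powr r)"
      using M[of t] sum_exp_step_size_le[of a r C t] assms that \<open>0 < K\<close>
      by (intro add_mono mult_left_mono) auto
    finally show ?thesis
      by (simp add: algebra_simps)
  qed
  have nonneg: "0 \<le> (\<Sum>s=1..t-1. onorm (\<lambda>v. phi ?\<gamma> A t s *v v))" for t
    by (intro sum_nonneg onorm_pos_le matrix_vector_mul_bounded_linear)
  show ?thesis
  proof (intro bigoI eventually_sequentiallyI)
    fix t :: nat
    assume "1 \<le> t"
    then show "norm (\<Sum>s=1..t-1. onorm (\<lambda>v. phi ?\<gamma> A t s *v v))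
        \<le> (K * M + K / C * (1 + 1 / (C * a))) * norm (real t powr r)"
      using bound[of t] nonneg[of t] by simp
  qed
qed

theorem lemma2:
  fixes H :: "real^'n \<Rightarrow> real" and G :: "real^'n \<Rightarrow> real^'n"
    and C L a r :: real and xstar :: "real^'n" and A :: "real^'n^'n"
  assumes grad: "\<And>x. (H has_derivative (\<lambda>h. G x \<bullet> h)) (at x)"
    and grad_cont: "continuous_on UNIV G"
    and C_pos: "C > 0"
    and strong_convex: "\<And>x y. H y \<ge> H x + G x \<bullet> (y - x) + C / 2 * (norm (y - x))\<^sup>2"
    and lipschitz: "\<And>x y. norm (G x - G y) \<le> L * norm (x - y)"
    and minimizer: "\<And>x. H xstar \<le> H x"
    and unique_min: "\<And>x. (\<forall>y. H x \<le> H y) \<Longrightarrow> x = xstar"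
    and hessian: "(G has_derivative (\<lambda>h. A *v h)) (at xstar)"
    and a_pos: "a > 0" and r_gt: "1/2 < r" and r_lt: "r < 1"
  shows "(\<lambda>t::nat. \<Sum>s=1..t-1. onorm (\<lambda>v. phi (\<lambda>k. a * real k powr (-r)) A t s *v v))
           \<in> O(\<lambda>t. real t powr r)"
proof -
  have "\<And>x y. C * (norm (y - x))\<^sup>2 \<le> (G y - G x) \<bullet> (y - x)"
    using strong_convex by (rule strongly_convex_imp_strongly_monotone)
  then have coercive: "\<And>v. C * (norm v)\<^sup>2 \<le> v \<bullet> (A *v v)"
    using hessian by (rule derivative_coercive_of_strongly_monotone)
  have bounded: "\<And>v. norm (A *v v) \<le> L * norm v"
    using lipschitz hessian by (rule derivative_bounded_of_lipschitz)
  have "(\<lambda>k. a * real k powr (-r)) = step_size a r"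
    by (simp add: fun_eq_iff step_size_def)
  then show ?thesis
    using sum_onorm_phi_bigo[OF coercive bounded C_pos a_pos r_gt r_lt] by simp
qed

end
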